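(* Let $f:\mathbb{R}\to\mathbb{R}$ be a differentiable, increasing, concave function and $b'<b$ real numbers. Let $\alpha_*\in\mathbb{R}$ satisfy $f(\alpha_* )=b'$ and let $\alpha_0\in\mathbb{R}$ satisfy $f(\alpha_0)\le b$. Consider the Newton–Dinkelbach method started at $\alpha_0$: while $f(\alpha_t)<b'$, set $\alpha_{t+1}:=\alpha_t+\frac{b-f(\alpha_t)}{f'(\alpha_t)}$; output the first $\alpha_t$ with $f(\alpha_t)\ge b'$. Then it outputs $\alpha_0$ if $f(\alpha_0)\ge b'$; otherwise it outputs $\hat\alpha$ satisfying $f(\hat\alpha)\in[b',b]$ in at most \[T:=1+\left\lceil\log_{\frac{1}{1-\epsilon}}\left(\max\left\{1,\frac{D_f(\alpha_*\mid\alpha_0)}{b-b'}\right\}\right)\right\rceil\] iterations, for any $\epsilon\in(0,1)$ satisfying $\epsilon(b-f(\alpha_0))\le b-b'$, where $D_f(\beta\mid\alpha):=f'(\alpha)(\beta-\alpha)+f(\alpha)-f(\beta)$ is the Bregman divergence of $f$. *)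

theory Defs
  imports "HOL-Analysis.Analysis"
begin

definition bregman :: "(real \<Rightarrow> real) \<Rightarrow> real \<Rightarrow> real \<Rightarrow> real" where
  "bregman f \<beta> \<alpha> = deriv f \<alpha> * (\<beta> - \<alpha>) + f \<alpha> - f \<beta>"

text \<open>Iterates of the Newton--Dinkelbach update alpha_{t+1} = alpha_t + (b - f alpha_t) / f'(alpha_t),
  started at alpha_0.  The algorithm stops at the first t with f(alpha_t) >= b'.\<close>
fun nd_iter :: "(real \<Rightarrow> real) \<Rightarrow> real \<Rightarrow> real \<Rightarrow> nat \<Rightarrow> real" where
  "nd_iter f b \<alpha>0 0 = \<alpha>0"
| "nd_iter f b \<alpha>0 (Suc t) =
     nd_iter f b \<alpha>0 t + (b - f (nd_iter f b \<alpha>0 t)) / deriv f (nd_iter f b \<alpha>0 t)"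

end

theory Submission
  imports Defs
begin

text \<open>
  While \<open>f(\<alpha>\<^sub>t) < b' = f(\<alpha>\<^sub>*)\<close>, the tangent at \<open>\<alpha>\<^sub>t\<close> has positive slope \<open>d\<^sub>t\<close>, and by
  concavity the Newton--Dinkelbach step never overshoots the level \<open>b\<close>. The tangent at
  \<open>\<alpha>\<^sub>t\<^sub>+\<^sub>1\<close>, evaluated at \<open>\<alpha>\<^sub>t\<close>, gives
  \<open>d\<^sub>t\<^sub>+\<^sub>1 / d\<^sub>t \<le> (f(\<alpha>\<^sub>t\<^sub>+\<^sub>1) - f(\<alpha>\<^sub>t)) / (b - f(\<alpha>\<^sub>t))\<close>, which is below \<open>1 - \<epsilon>\<close>
  as long as \<open>f(\<alpha>\<^sub>t\<^sub>+\<^sub>1) < b'\<close>; this is where the condition on \<open>\<epsilon>\<close> enters.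
  The Bregman divergence \<open>D\<^sub>t = D\<^sub>f(\<alpha>\<^sub>* | \<alpha>\<^sub>t)\<close> satisfies
  \<open>D\<^sub>t\<^sub>+\<^sub>1 < (d\<^sub>t\<^sub>+\<^sub>1 / d\<^sub>t) D\<^sub>t\<close>, so it decays geometrically with ratio \<open>1 - \<epsilon>\<close>,
  yet \<open>D\<^sub>t > b - b'\<close> whenever \<open>f(\<alpha>\<^sub>t\<^sub>+\<^sub>1) < b'\<close>.
\<close>

definition nd_step :: "(real \<Rightarrow> real) \<Rightarrow> real \<Rightarrow> real \<Rightarrow> real" where
  "nd_step f b x = x + (b - f x) / deriv f x"

lemma nd_iter_Suc_step [simp]: "nd_iter f b \<alpha>0 (Suc t) = nd_step f b (nd_iter f b \<alpha>0 t)"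
  by (simp add: nd_step_def)

declare nd_iter.simps(2) [simp del]

locale increasing_concave =
  fixes f :: "real \<Rightarrow> real"
  assumes differentiable: "\<And>x. f differentiable (at x)"
    and monotone: "mono f"
    and concave: "concave_on UNIV f"
begin

lemma le_tangent: "f y \<le> f x + deriv f x * (y - x)"
proof -
  have convex: "convex_on UNIV (\<lambda>x. - f x)"
    using concave by (simp add: concave_on_def)
  have "((\<lambda>x. - f x) has_field_derivative - deriv f x) (at x within UNIV)"
    using differentiable[of x]
    by (auto intro!: derivative_intros simp: DERIV_deriv_iff_real_differentiable)
  from convex_on_imp_above_tangent[OF convex _ _ _ this, of y] show ?thesis
    by simp
qed

lemma below_level_imp_deriv_pos:
  assumes "f x < f y"
  shows "x < y" and "0 < deriv f x"
proof -
  show "x < y"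
    using assms monotone by (metis monoD not_le)
  moreover have "0 < deriv f x * (y - x)"
    using assms le_tangent[of y x] by simp
  ultimately show "0 < deriv f x"
    by (simp add: zero_less_mult_iff)
qed

lemma nd_step_le_target:
  assumes "0 < deriv f x"
  shows "f (nd_step f b x) \<le> b"
  using le_tangent[of "nd_step f b x" x] assms by (simp add: nd_step_def)

lemma nd_step_increasing:
  assumes "0 < deriv f x" "f x \<le> b"
  shows "f x \<le> f (nd_step f b x)"
  using assms monotone by (simp add: nd_step_def monoD)

lemma deriv_nd_step_ratio:
  assumes "0 < deriv f x"
  shows "deriv f (nd_step f b x) * (b - f x) \<le> deriv f x * (f (nd_step f b x) - f x)"
proof -
  let ?x' = "nd_step f b x"
  have "f x \<le> f ?x' + deriv f ?x' * (x - ?x')"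
    by (rule le_tangent)
  also have "x - ?x' = (f x - b) / deriv f x"
    using assms by (simp add: nd_step_def field_simps)
  finally show ?thesis
    using assms by (simp add: field_simps)
qed

lemma bregman_nd_step_gap:
  assumes "0 < deriv f x"
  shows "deriv f x * (\<beta> - nd_step f b x) = bregman f \<beta> x - (b - f \<beta>)"
  using assms by (simp add: nd_step_def bregman_def field_simps)

lemma bregman_gt_gap:
  assumes "f x < f \<beta>" "f (nd_step f b x) < f \<beta>"
  shows "b - f \<beta> < bregman f \<beta> x"
proof -
  have d: "0 < deriv f x" and "nd_step f b x < \<beta>"
    using below_level_imp_deriv_pos assms by blast+
  then have "0 < deriv f x * (\<beta> - nd_step f b x)"
    by simp
  then show ?thesis
    using bregman_nd_step_gap[OF d, of \<beta> b] by linarith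
qed

lemma bregman_nd_step_contracts:
  assumes below: "f x < f \<beta>" "f (nd_step f b x) < f \<beta>"
    and level: "f \<beta> < b"
    and eps: "\<epsilon> * (b - f x) \<le> b - f \<beta>"
  shows "bregman f \<beta> (nd_step f b x) < (1 - \<epsilon>) * bregman f \<beta> x"
proof -
  let ?x' = "nd_step f b x"
  define d d' D where "d = deriv f x" and "d' = deriv f ?x'" and "D = bregman f \<beta> x"
  have d: "0 < d" and d': "0 < d'"
    using below below_level_imp_deriv_pos unfolding d_def d'_def by blast+
  have gap: "d * (\<beta> - ?x') = D - (b - f \<beta>)"
    using bregman_nd_step_gap d unfolding d_def D_def by blast
  have D: "0 < D"
    using bregman_gt_gap[OF below] level unfolding D_def by linarith
  have progress: "f ?x' - f x < (1 - \<epsilon>) * (b - f x)"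
    using below eps by (simp add: algebra_simps)
  have "d' * (b - f x) \<le> d * (f ?x' - f x)"
    using deriv_nd_step_ratio d unfolding d_def d'_def by blast
  moreover have "d * (f ?x' - f x) < ((1 - \<epsilon>) * d) * (b - f x)"
    using mult_strict_left_mono[OF progress d] by (simp only: ac_simps)
  ultimately have "d' * (b - f x) < ((1 - \<epsilon>) * d) * (b - f x)"
    by linarith
  then have ratio: "d' < (1 - \<epsilon>) * d"
    by (rule mult_right_less_imp_less) (use below level in simp)
  have "d * bregman f \<beta> ?x' = d' * (d * (\<beta> - ?x')) + d * (f ?x' - f \<beta>)"
    unfolding d'_def bregman_def by (simp add: algebra_simps)
  then have "d * bregman f \<beta> ?x' = d' * (D - (b - f \<beta>)) + d * (f ?x' - f \<beta>)"
    by (simp only: gap)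
  moreover have "d' * (D - (b - f \<beta>)) = d' * D - d' * (b - f \<beta>)"
    by (simp add: right_diff_distrib)
  moreover have "d * (f ?x' - f \<beta>) < 0"
    using below d by (simp add: mult_pos_neg)
  moreover have "0 < d' * (b - f \<beta>)"
    using level d' by simp
  moreover have "d' * D < d * ((1 - \<epsilon>) * D)"
    using mult_strict_right_mono[OF ratio D] by (simp only: ac_simps)
  ultimately have "d * bregman f \<beta> ?x' < d * ((1 - \<epsilon>) * D)"
    by linarith
  then show ?thesis
    using d by (simp add: D_def)
qed

end

lemma power_bound_imp_less_ceiling_log:
  fixes r c D :: real
  assumes "0 < r" "r < 1" "0 < c" "c < r ^ k * D"
  shows "int k < \<lceil>log (1 / r) (max 1 (D / c))\<rceil>"
proof -
  have "(1 / r) ^ k < D / c"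
    using assms by (simp add: field_simps)
  also have "\<dots> \<le> max 1 (D / c)"
    by simp
  finally have "real k < log (1 / r) (max 1 (D / c))"
    using assms by (simp add: less_log_iff powr_realpow)
  then show ?thesis
    by linarith
qed

locale newton_dinkelbach = increasing_concave +
  fixes b b' \<beta> \<alpha>0 \<epsilon> :: real
  assumes levels: "b' < b"
    and target: "f \<beta> = b'"
    and eps: "0 < \<epsilon>" "\<epsilon> < 1"
    and eps_bound: "\<epsilon> * (b - f \<alpha>0) \<le> b - b'"
begin

abbreviation \<alpha> :: "nat \<Rightarrow> real" where
  "\<alpha> \<equiv> nd_iter f b \<alpha>0"

lemma deriv_iter_pos:
  assumes "f (\<alpha> t) < b'"
  shows "0 < deriv f (\<alpha> t)"
  using below_level_imp_deriv_pos(2)[of "\<alpha> t" \<beta>] assms target by simp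

lemma iter_value_increasing:
  assumes "\<forall>s<k. f (\<alpha> s) < b'"
  shows "f \<alpha>0 \<le> f (\<alpha> k)"
  using assms
proof (induction k)
  case 0
  then show ?case by simp
next
  case (Suc k)
  have "f (\<alpha> k) < b'"
    using Suc.prems by (auto simp del: nd_iter_Suc_step)
  then have "f (\<alpha> k) \<le> f (\<alpha> (Suc k))"
    using nd_step_increasing deriv_iter_pos levels by simp
  with Suc show ?case by simp
qed

lemma bregman_iter_decay:
  assumes "\<forall>s\<le>k. f (\<alpha> s) < b'"
  shows "bregman f \<beta> (\<alpha> k) \<le> (1 - \<epsilon>) ^ k * bregman f \<beta> \<alpha>0"
  using assms
proof (induction k)
  case 0
  then show ?case by simp
next
  case (Suc k)
  have below: "f (\<alpha> k) < b'" "f (\<alpha> (Suc k)) < b'"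
    using Suc.prems by (auto simp del: nd_iter_Suc_step)
  have "\<epsilon> * (b - f (\<alpha> k)) \<le> \<epsilon> * (b - f \<alpha>0)"
    using iter_value_increasing[of k] Suc.prems eps by simp
  then have "bregman f \<beta> (\<alpha> (Suc k)) < (1 - \<epsilon>) * bregman f \<beta> (\<alpha> k)"
    using bregman_nd_step_contracts[of "\<alpha> k" \<beta> b \<epsilon>] below target levels eps_bound
    by simp
  also have "\<dots> \<le> (1 - \<epsilon>) ^ Suc k * bregman f \<beta> \<alpha>0"
    using Suc eps by (simp add: mult_left_mono)
  finally show ?case by simp
qed

lemma hitting_time_bound:
  assumes "\<forall>s<t. f (\<alpha> s) < b'"
  shows "int t \<le> 1 + \<lceil>log (1 / (1 - \<epsilon>)) (max 1 (bregman f \<beta> \<alpha>0 / (b - b')))\<rceil>"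
proof (cases "t < 2")
  case True
  have "0 \<le> log (1 / (1 - \<epsilon>)) (max 1 (bregman f \<beta> \<alpha>0 / (b - b')))"
    using eps by simp
  with True show ?thesis by linarith
next
  case False
  then obtain k where t: "t = Suc (Suc k)"
    by (metis add_2_eq_Suc less_iff_Suc_add not_less_eq)
  have "f (\<alpha> k) < b'" "f (\<alpha> (Suc k)) < b'"
    using assms t by (auto simp del: nd_iter_Suc_step)
  then have "b - b' < bregman f \<beta> (\<alpha> k)"
    using bregman_gt_gap[of "\<alpha> k" \<beta> b] target by simp
  also have "\<dots> \<le> (1 - \<epsilon>) ^ k * bregman f \<beta> \<alpha>0"
    using bregman_iter_decay assms t by simp
  finally have "int k < \<lceil>log (1 / (1 - \<epsilon>)) (max 1 (bregman f \<beta> \<alpha>0 / (b - b')))\<rceil>"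
    using power_bound_imp_less_ceiling_log[of "1 - \<epsilon>" "b - b'" k] eps levels by simp
  moreover have "int t = int k + 2"
    using t by simp
  ultimately show ?thesis
    by linarith
qed

lemma iter_reaches_level: "\<exists>t. b' \<le> f (\<alpha> t)"
proof (rule ccontr)
  let ?L = "\<lceil>log (1 / (1 - \<epsilon>)) (max 1 (bregman f \<beta> \<alpha>0 / (b - b')))\<rceil>"
  assume "\<nexists>t. b' \<le> f (\<alpha> t)"
  then have "int (nat ?L + 2) \<le> 1 + ?L"
    by (intro hitting_time_bound) (simp add: not_le)
  moreover have "?L \<le> int (nat ?L)"
    by simp
  ultimately show False
    by linarith
qed

end

theorem theorem2p20:
  fixes f :: "real \<Rightarrow> real" and b b' \<alpha>s \<alpha>0 \<epsilon> :: real
  assumes diff: "\<And>x. f differentiable (at x)"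
    and incr: "mono f"
    and conc: "concave_on UNIV f"
    and bb: "b' < b"
    and star: "f \<alpha>s = b'"
    and start: "f \<alpha>0 \<le> b"
    and eps: "0 < \<epsilon>" "\<epsilon> < 1"
    and eps_bound: "\<epsilon> * (b - f \<alpha>0) \<le> b - b'"
  shows "\<exists>t::nat. (\<forall>s<t. f (nd_iter f b \<alpha>0 s) < b')
           \<and> b' \<le> f (nd_iter f b \<alpha>0 t)
           \<and> (b' \<le> f \<alpha>0 \<longrightarrow> t = 0)
           \<and> (f \<alpha>0 < b' \<longrightarrow>
                f (nd_iter f b \<alpha>0 t) \<le> b
              \<and> int t \<le> 1 + \<lceil>log (1 / (1 - \<epsilon>)) (max 1 (bregman f \<alpha>s \<alpha>0 / (b - b')))\<rceil>)"
proof -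
  interpret newton_dinkelbach f b b' \<alpha>s \<alpha>0 \<epsilon>
    by unfold_locales (fact assms)+
  obtain t where below: "\<forall>s<t. f (\<alpha> s) < b'" and hit: "b' \<le> f (\<alpha> t)"
    using iter_reaches_level exists_least_iff[of "\<lambda>t. b' \<le> f (\<alpha> t)"] not_le by blast
  have "f (\<alpha> t) \<le> b" if start_below: "f \<alpha>0 < b'"
  proof -
    obtain m where "t = Suc m"
      using start_below hit by (cases t) auto
    then show ?thesis
      using nd_step_le_target deriv_iter_pos below by simp
  qed
  moreover have "t = 0" if "b' \<le> f \<alpha>0"
  proof (rule ccontr)
    assume "t \<noteq> 0"
    with below have "f (\<alpha> 0) < b'"
      by blast
    with that show False
      by simp
  qed
  ultimately show ?thesis
    using below hit hitting_time_bound[OF below] by (intro exI[of _ t]) auto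
qed

end
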